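(* Let $A\in\mathbb{R}^{n\times n}$ be Metzler, $J\in\mathbb{R}^{n\times n}$ be nonnegative and $\bar T>0$. The following statements are equivalent: (a) There exist $\lambda,\mu,\nu\in\mathbb{R}^n_{>0}$ such that $\lambda^\top Ax\le-\mu^\top x$ for all $x\in\mathbb{R}^n_{\ge0}$ and $\lambda^\top Je^{A\theta}x-\lambda^\top x\le-\nu^\top x$ for all $x\in\mathbb{R}^n_{\ge0}$ and all $\theta\ge\bar T$. (b) There exists $\lambda\in\mathbb{R}^n_{>0}$ such that $\lambda^\top A<0$ and $\lambda^\top Je^{A\theta}-\lambda^\top<0$ for all $\theta\ge\bar T$. (c) There exists $\lambda\in\mathbb{R}^n_{>0}$ such that $\lambda^\top A<0$ and $\lambda^\top Je^{A\bar T}-\lambda^\top<0$. (d) There exists $\lambda\in\mathbb{R}^n_{>0}$ with $\lambda^\top A<0$ and $\lambda^\top(Je^{A\bar T}-I_n)<0$ (a common linear copositive Lyapunov function for the pair $(A,Je^{A\bar T}-I_n)$). (e) $\ker\begin{bmatrix} I_n & -A & -(Je^{A\bar T}-I_n)\end{bmatrix}\cap\mathbb{R}^{3n}_{\ge0}=\{0\}$. (f) There exist a differentiable $\zeta:[0,\bar T]\to\mathbb{R}^n$ with $\zeta(\bar T)\in\mathbb{R}^n_{>0}$ and $\varepsilon>0$ such that $\zeta(\bar T)^\top A<0$, $\zeta(\tau)^\top A-\dot\zeta(\tau)^\top\le0$ for all $\tau\in[0,\bar T]$, and $\zeta(\bar T)^\top J-\zeta(0)^\top+\varepsilon\mathbf{1}_n^\top\le0$.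 (g) There exist a differentiable $\xi:[0,\bar T]\to\mathbb{R}^n$ with $\xi(0)\in\mathbb{R}^n_{>0}$ and $\varepsilon>0$ such that $\xi(0)^\top A<0$, $\xi(\tau)^\top A+\dot\xi(\tau)^\top\le0$ for all $\tau\in[0,\bar T]$, and $\xi(0)^\top J-\xi(\bar T)^\top+\varepsilon\mathbf{1}_n^\top\le0$. Moreover, if one of these statements holds, the impulsive system is asymptotically stable under minimum dwell-time $\bar T$.
   Context: Consider the linear impulsive system $\dot x(t)=Ax(t)$ for $t\neq t_k$, $x(t_k^+)=Jx(t_k)$, $x(t_0)=x_0$, where $x(t)\in\mathbb{R}^n$, $x(t^+):=\lim_{s\downarrow t}x(s)$, and the impulse times $\{t_k\}_{k\in\mathbb{N}}$ are strictly increasing with $t_k\to\infty$; $T_k:=t_{k+1}-t_k$. A matrix is Metzler if its off-diagonal entries are nonnegative and nonnegative if all entries are nonnegative. Vector inequalities are componentwise; $\mathbf{1}_n$ is the vector of ones. "Asymptotically stable under minimum dwell-time $\bar T$" means the zero solution is globally asymptotically stable for every impulse sequence with $\bar T\le T_k<\infty$ for all $k$. *)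

theory Defs
  imports "HOL-Analysis.Analysis"
begin

definition metzler :: "real^'n^'n \<Rightarrow> bool" where
  "metzler A \<longleftrightarrow> (\<forall>i j. i \<noteq> j \<longrightarrow> 0 \<le> A $ i $ j)"

definition nonneg_matrix :: "real^'n^'n \<Rightarrow> bool" where
  "nonneg_matrix J \<longleftrightarrow> (\<forall>i j. 0 \<le> J $ i $ j)"

definition pos_vec :: "real^'n \<Rightarrow> bool" where
  "pos_vec v \<longleftrightarrow> (\<forall>i. 0 < v $ i)"

definition nonneg_vec :: "real^'n \<Rightarrow> bool" where
  "nonneg_vec v \<longleftrightarrow> (\<forall>i. 0 \<le> v $ i)"

definition mpow :: "real^'n^'n \<Rightarrow> nat \<Rightarrow> real^'n^'n" where
  "mpow M k = (((**) M) ^^ k) (mat 1)"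

definition mexp :: "real^'n^'n \<Rightarrow> real^'n^'n" where
  "mexp M = (\<Sum>k. (1 / fact k) *\<^sub>R mpow M k)"

text \<open>Solutions of the linear impulsive system x' = A x (t \<noteq> t_k), x(t_k^+) = J x(t_k),
  x(t0) = x0, on [t0, \<infinity>). Impulses occur at every t k, k = 0,1,2,... .
  On each interval (t_k, t_{k+1}] the solution is continuous (left-continuous at t_{k+1}),
  satisfies the ODE in the interior, and its right limit at t_k equals J x(t_k).\<close>

definition impulsive_solution ::
  "real^'n^'n \<Rightarrow> real^'n^'n \<Rightarrow> (nat \<Rightarrow> real) \<Rightarrow> real^'n \<Rightarrow> (real \<Rightarrow> real^'n) \<Rightarrow> bool" where
  "impulsive_solution A J t x0 x \<longleftrightarrow>
     x (t 0) = x0 \<and>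
     (\<forall>k. continuous_on {t k<..t (Suc k)} x) \<and>
     (\<forall>k. \<forall>s\<in>{t k<..<t (Suc k)}. (x has_vector_derivative (A *v x s)) (at s)) \<and>
     (\<forall>k. (x \<longlongrightarrow> J *v x (t k)) (at_right (t k)))"

definition dwell_admissible :: "real \<Rightarrow> (nat \<Rightarrow> real) \<Rightarrow> bool" where
  "dwell_admissible Tbar t \<longleftrightarrow>
     strict_mono t \<and> filterlim t at_top sequentially \<and> (\<forall>k. Tbar \<le> t (Suc k) - t k)"

definition GAS_impulsive :: "real^'n^'n \<Rightarrow> real^'n^'n \<Rightarrow> (nat \<Rightarrow> real) \<Rightarrow> bool" where
  "GAS_impulsive A J t \<longleftrightarrow>
     (\<forall>\<epsilon>>0. \<exists>\<delta>>0. \<forall>x0 x. norm x0 < \<delta> \<and> impulsive_solution A J t x0 x \<longrightarrow>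
         (\<forall>s\<ge>t 0. norm (x s) < \<epsilon>)) \<and>
     (\<forall>x0 x. impulsive_solution A J t x0 x \<longrightarrow> (x \<longlongrightarrow> 0) at_top)"

definition asymp_stable_min_dwell :: "real^'n^'n \<Rightarrow> real^'n^'n \<Rightarrow> real \<Rightarrow> bool" where
  "asymp_stable_min_dwell A J Tbar \<longleftrightarrow> (\<forall>t. dwell_admissible Tbar t \<longrightarrow> GAS_impulsive A J t)"

text \<open>The conditions (a)-(g). Row-vector products lambda^T M are written lambda v* M;
  vector inequalities are componentwise.\<close>

definition cond_a :: "real^'n^'n \<Rightarrow> real^'n^'n \<Rightarrow> real \<Rightarrow> bool" where
  "cond_a A J Tbar \<longleftrightarrow> (\<exists>lam mu nu. pos_vec lam \<and> pos_vec mu \<and> pos_vec nu \<and>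
     (\<forall>x. nonneg_vec x \<longrightarrow> lam \<bullet> (A *v x) \<le> - (mu \<bullet> x)) \<and>
     (\<forall>x \<theta>. nonneg_vec x \<and> \<theta> \<ge> Tbar \<longrightarrow>
         lam \<bullet> ((J ** mexp (\<theta> *\<^sub>R A)) *v x) - lam \<bullet> x \<le> - (nu \<bullet> x)))"

definition cond_b :: "real^'n^'n \<Rightarrow> real^'n^'n \<Rightarrow> real \<Rightarrow> bool" where
  "cond_b A J Tbar \<longleftrightarrow> (\<exists>lam. pos_vec lam \<and> (\<forall>j. (lam v* A) $ j < 0) \<and>
     (\<forall>\<theta>\<ge>Tbar. \<forall>j. (lam v* (J ** mexp (\<theta> *\<^sub>R A))) $ j - lam $ j < 0))"

definition cond_c :: "real^'n^'n \<Rightarrow> real^'n^'n \<Rightarrow> real \<Rightarrow> bool" where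
  "cond_c A J Tbar \<longleftrightarrow> (\<exists>lam. pos_vec lam \<and> (\<forall>j. (lam v* A) $ j < 0) \<and>
     (\<forall>j. (lam v* (J ** mexp (Tbar *\<^sub>R A))) $ j - lam $ j < 0))"

definition cond_d :: "real^'n^'n \<Rightarrow> real^'n^'n \<Rightarrow> real \<Rightarrow> bool" where
  "cond_d A J Tbar \<longleftrightarrow> (\<exists>lam. pos_vec lam \<and> (\<forall>j. (lam v* A) $ j < 0) \<and>
     (\<forall>j. (lam v* (J ** mexp (Tbar *\<^sub>R A) - mat 1)) $ j < 0))"

text \<open>(e): the kernel of the n x 3n block matrix [I, -A, -(J e^{A Tbar} - I)] meets the
  nonnegative orthant only at 0; a vector of R^{3n} is written as a triple (u,v,w) of
  vectors in R^n.\<close>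

definition cond_e :: "real^'n^'n \<Rightarrow> real^'n^'n \<Rightarrow> real \<Rightarrow> bool" where
  "cond_e A J Tbar \<longleftrightarrow> (\<forall>u v w. nonneg_vec u \<and> nonneg_vec v \<and> nonneg_vec w \<and>
     u - A *v v - (J ** mexp (Tbar *\<^sub>R A) - mat 1) *v w = 0 \<longrightarrow>
     u = 0 \<and> v = 0 \<and> w = 0)"

definition cond_f :: "real^'n^'n \<Rightarrow> real^'n^'n \<Rightarrow> real \<Rightarrow> bool" where
  "cond_f A J Tbar \<longleftrightarrow> (\<exists>(\<zeta>::real \<Rightarrow> real^'n) \<zeta>' \<epsilon>.
     (\<forall>\<tau>\<in>{0..Tbar}. (\<zeta> has_vector_derivative \<zeta>' \<tau>) (at \<tau> within {0..Tbar})) \<and>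
     pos_vec (\<zeta> Tbar) \<and> \<epsilon> > 0 \<and>
     (\<forall>j. (\<zeta> Tbar v* A) $ j < 0) \<and>
     (\<forall>\<tau>\<in>{0..Tbar}. \<forall>j. (\<zeta> \<tau> v* A) $ j - \<zeta>' \<tau> $ j \<le> 0) \<and>
     (\<forall>j. (\<zeta> Tbar v* J) $ j - \<zeta> 0 $ j + \<epsilon> \<le> 0))"

definition cond_g :: "real^'n^'n \<Rightarrow> real^'n^'n \<Rightarrow> real \<Rightarrow> bool" where
  "cond_g A J Tbar \<longleftrightarrow> (\<exists>(\<xi>::real \<Rightarrow> real^'n) \<xi>' \<epsilon>.
     (\<forall>\<tau>\<in>{0..Tbar}. (\<xi> has_vector_derivative \<xi>' \<tau>) (at \<tau> within {0..Tbar})) \<and>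
     pos_vec (\<xi> 0) \<and> \<epsilon> > 0 \<and>
     (\<forall>j. (\<xi> 0 v* A) $ j < 0) \<and>
     (\<forall>\<tau>\<in>{0..Tbar}. \<forall>j. (\<xi> \<tau> v* A) $ j + \<xi>' \<tau> $ j \<le> 0) \<and>
     (\<forall>j. (\<xi> 0 v* J) $ j - \<xi> Tbar $ j + \<epsilon> \<le> 0))"

end

theory Submission
  imports Defs
begin

(*
  For a Metzler matrix A the exponential e^(tA) is entrywise nonnegative (A + c I is nonnegative
  for large c), so componentwise inequalities between row vectors survive right multiplication
  by e^(tA). With lam^T A < 0 this gives lam^T e^(sA) <= lam^T for s >= 0, and the single
  inequality lam^T J e^(A T) < lam^T of (c) propagates to all theta >= T with a uniform factor
  q < 1; this is (a) and (b). Condition (d) is (c) rewritten, and (d) <-> (e) is Gordan's theorem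
  of the alternative for the columns of [I, -A, -(J e^(A T) - I)]. A function with
  zeta' >= zeta A is a supersolution of the adjoint equation, so zeta(0) e^(A T) <= zeta(T); this
  turns the jump inequality of (f) into (c), conversely (c) yields an explicit zeta, and (g) is (f)
  with time reversed. Finally V(x) = lam^T |x| does not increase along the flow and shrinks by the
  factor q at every impulse, so solutions decay geometrically in the number of impulses.
*)

lemma vector_matrix_mult_component: "(x v* M) $ j = (\<Sum>i\<in>UNIV. x $ i * M $ i $ j)"
  by (simp add: vector_matrix_mult_def)

lemma matrix_vector_mult_component: "(M *v x) $ i = (\<Sum>j\<in>UNIV. M $ i $ j * x $ j)"
  by (simp add: matrix_vector_mult_def)

lemma vector_matrix_mult_mono:
  fixes M :: "real^'m^'n"
  assumes "\<And>i. x $ i \<le> y $ i" and "\<And>i j. 0 \<le> M $ i $ j"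
  shows "(x v* M) $ j \<le> (y v* M) $ j"
  unfolding vector_matrix_mult_component by (intro sum_mono mult_right_mono assms)

lemma inner_matrix_vector_mult_axis: "x \<bullet> (M *v axis j 1) = (x v* M) $ j"
  by (simp add: dot_lmul_matrix[symmetric] inner_axis)

lemma bounded_linear_matrix_mult_right: "bounded_linear (\<lambda>X::real^'n^'m. X ** M)"
  unfolding linear_conv_bounded_linear[symmetric]
  by (intro linearI)
    (simp_all add: matrix_matrix_mult_def vec_eq_iff distrib_right sum.distrib sum_distrib_left
      mult.assoc)

lemma bounded_linear_matrix_mult_left: "bounded_linear (\<lambda>X::real^'n^'m. M ** X)"
  unfolding linear_conv_bounded_linear[symmetric]
  by (intro linearI) (simp_all add: matrix_add_ldistrib matrix_scalar_ac scalar_matrix_assoc)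

lemma has_vector_derivative_vec_nth_iff:
  fixes f :: "real \<Rightarrow> real^'n"
  shows "(f has_vector_derivative f') (at x within S) \<longleftrightarrow>
         (\<forall>i. ((\<lambda>x. f x $ i) has_real_derivative f' $ i) (at x within S))"
  unfolding has_vector_derivative_def has_field_derivative_def
  by (subst has_derivative_componentwise_within)
    (auto simp: Basis_vec_def inner_axis mult_commute_abs)

lemma sum_UNIV_Plus:
  "sum g (UNIV :: ('a::finite + 'b::finite) set) = (\<Sum>i\<in>UNIV. g (Inl i)) + (\<Sum>i\<in>UNIV. g (Inr i))"
  by (subst UNIV_Plus_UNIV[symmetric], subst sum.Plus) (simp_all add: o_def)

section \<open>The matrix exponential\<close>

lemma mpow_0 [simp]: "mpow M 0 = mat 1"
  by (simp add: mpow_def)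

lemma mpow_Suc: "mpow M (Suc k) = M ** mpow M k"
  by (simp add: mpow_def)

lemma mpow_Suc_right: "mpow M (Suc k) = mpow M k ** M"
  by (induction k) (simp_all add: mpow_Suc matrix_mul_assoc)

lemma mpow_scaleR: "mpow (t *\<^sub>R M) k = t ^ k *\<^sub>R mpow M k"
  by (induction k) (simp_all add: mpow_Suc matrix_scalar_ac flip: scalar_matrix_assoc)

lemma mpow_nonneg: "nonneg_matrix M \<Longrightarrow> 0 \<le> mpow M k $ i $ j"
  by (induction k arbitrary: i j)
    (auto simp: mpow_Suc matrix_matrix_mult_def nonneg_matrix_def mat_def intro!: sum_nonneg)

definition entry_abs_sum :: "real^'n^'m \<Rightarrow> real" where
  "entry_abs_sum M = (\<Sum>i\<in>UNIV. \<Sum>j\<in>UNIV. \<bar>M $ i $ j\<bar>)"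

lemma norm_le_entry_abs_sum: "norm M \<le> entry_abs_sum M"
proof -
  have "norm M \<le> (\<Sum>i\<in>UNIV. norm (M $ i))"
    unfolding norm_vec_def by (rule L2_set_le_sum) simp
  also have "\<dots> \<le> entry_abs_sum M"
    unfolding entry_abs_sum_def by (intro sum_mono norm_le_l1_cart)
  finally show ?thesis .
qed

lemma abs_mpow_entry_le: "\<bar>mpow M k $ i $ j\<bar> \<le> entry_abs_sum M ^ k"
proof (induction k arbitrary: i j)
  case 0
  then show ?case by (simp add: mat_def)
next
  case (Suc k)
  have row: "(\<Sum>l\<in>UNIV. \<bar>M $ i $ l\<bar>) \<le> entry_abs_sum M"
    unfolding entry_abs_sum_def by (rule member_le_sum) (auto intro: sum_nonneg)
  have "\<bar>mpow M (Suc k) $ i $ j\<bar> \<le> (\<Sum>l\<in>UNIV. \<bar>M $ i $ l\<bar> * \<bar>mpow M k $ l $ j\<bar>)"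
    unfolding mpow_Suc matrix_matrix_mult_def
      by (auto intro: order_trans[OF sum_abs] simp: abs_mult)
  also have "\<dots> \<le> (\<Sum>l\<in>UNIV. \<bar>M $ i $ l\<bar>) * entry_abs_sum M ^ k"
    unfolding sum_distrib_right by (intro sum_mono mult_left_mono Suc) auto
  also have "\<dots> \<le> entry_abs_sum M ^ Suc k"
    using row by (simp add: mult_right_mono entry_abs_sum_def sum_nonneg)
  finally show ?case .
qed

lemma summable_mexp_series:
  fixes M :: "real^'n^'n"
  shows "summable (\<lambda>k. (1 / fact k) *\<^sub>R mpow M k)"
proof (rule summable_comparison_test')
  let ?c = "real (CARD('n)) * real (CARD('n))"
  show "summable (\<lambda>k. ?c * (inverse (fact k) * entry_abs_sum M ^ k))"
    by (intro summable_mult summable_exp)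
  fix k
  have "entry_abs_sum (mpow M k) \<le> (\<Sum>i\<in>(UNIV::'n set). \<Sum>j\<in>(UNIV::'n set). entry_abs_sum M ^ k)"
    unfolding entry_abs_sum_def[of "mpow M k"] by (intro sum_mono) (rule abs_mpow_entry_le)
  then have "norm (mpow M k) \<le> ?c * entry_abs_sum M ^ k"
    using norm_le_entry_abs_sum[of "mpow M k"] by simp
  then show "norm ((1 / fact k) *\<^sub>R mpow M k) \<le> ?c * (inverse (fact k) * entry_abs_sum M ^ k)"
    by (simp add: field_simps)
qed

lemma mexp_scaleR_sums: "(\<lambda>k. (t ^ k / fact k) *\<^sub>R mpow M k) sums mexp (t *\<^sub>R M)"
  using summable_sums[OF summable_mexp_series[of "t *\<^sub>R M"]]
  by (simp add: mexp_def mpow_scaleR)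

lemma mexp_scaleR_mult_sums:
  "(\<lambda>k. (t ^ k / fact k) *\<^sub>R mpow M (Suc k)) sums (mexp (t *\<^sub>R M) ** M)"
  "(\<lambda>k. (t ^ k / fact k) *\<^sub>R mpow M (Suc k)) sums (M ** mexp (t *\<^sub>R M))"
  using bounded_linear.sums[OF bounded_linear_matrix_mult_right[of M] mexp_scaleR_sums[of t M]]
  by (simp add: mpow_Suc_right flip: scalar_matrix_assoc)
    (use bounded_linear.sums[OF bounded_linear_matrix_mult_left[of M] mexp_scaleR_sums[of t M]] in
      \<open>simp add: mpow_Suc matrix_scalar_ac flip: scalar_matrix_assoc\<close>)

lemma mexp_scaleR_mult_commute: "mexp (t *\<^sub>R M) ** M = M ** mexp (t *\<^sub>R M)"
  using mexp_scaleR_mult_sums by (rule sums_unique2)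

lemma mexp_zero [simp]: "mexp (0::real^'n^'n) = mat 1"
proof -
  have "(\<lambda>k. (0 ^ k / fact k) *\<^sub>R mpow (0::real^'n^'n) k) = (\<lambda>k. if k = 0 then mat 1 else 0)"
    by auto
  then have "(\<lambda>k. (0 ^ k / fact k) *\<^sub>R mpow (0::real^'n^'n) k) sums mat 1"
    using sums_single[of 0 "\<lambda>_. mat 1"] by simp
  then show ?thesis
    using mexp_scaleR_sums[of 0 "0::real^'n^'n"] sums_unique2 by auto
qed

lemma has_real_derivative_mexp_entry:
  "((\<lambda>t. mexp (t *\<^sub>R M) $ i $ j) has_real_derivative (mexp (t *\<^sub>R M) ** M) $ i $ j) (at t)"
proof -
  define c where "c k = mpow M k $ i $ j / fact k" for k
  have entry_sums: "(\<lambda>k. c k * t ^ k) sums (mexp (t *\<^sub>R M) $ i $ j)" for t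
    using sums_vec_nth[OF sums_vec_nth[OF mexp_scaleR_sums[of t M]], of i j]
      by (simp add: c_def mult_ac)
  have "(\<lambda>n. diffs c n * t ^ n) sums ((mexp (t *\<^sub>R M) ** M) $ i $ j)"
    using sums_vec_nth[OF sums_vec_nth[OF mexp_scaleR_mult_sums(1)[of t M]], of i j]
    by (simp add: diffs_def c_def field_simps del: of_nat_Suc)
  moreover have "((\<lambda>t. \<Sum>k. c k * t ^ k) has_real_derivative (\<Sum>n. diffs c n * t ^ n)) (at t)"
    using entry_sums by (intro termdiffs_strong_converges_everywhere) (rule sums_summable)
  ultimately show ?thesis
    using entry_sums by (simp add: sums_iff)
qed

lemma has_real_derivative_mexp_affine_entry:
  "((\<lambda>r. mexp ((a + c * r) *\<^sub>R M) $ i $ j) has_real_derivative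
     c * (mexp ((a + c * r) *\<^sub>R M) ** M) $ i $ j) (at r)"
proof -
  have "((\<lambda>r. a + c * r) has_real_derivative c) (at r)"
    by (auto intro!: derivative_eq_intros)
  from DERIV_chain2[OF has_real_derivative_mexp_entry this] show ?thesis
    by (simp add: mult.commute)
qed

lemma continuous_mexp_affine_entry: "continuous_on S (\<lambda>r. mexp ((a + c * r) *\<^sub>R M) $ i $ j)"
  by (rule continuous_at_imp_continuous_on)
    (use has_real_derivative_mexp_affine_entry DERIV_isCont in blast)

lemma has_vector_derivative_row_mexp:
  "((\<lambda>\<tau>. w v* mexp (\<tau> *\<^sub>R A)) has_vector_derivative w v* (mexp (\<tau> *\<^sub>R A) ** A)) (at \<tau> within S)"
  unfolding has_vector_derivative_vec_nth_iff vector_matrix_mult_component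
  by (intro allI has_field_derivative_at_within[of _ _ \<tau> S] DERIV_sum DERIV_cmult
      has_real_derivative_mexp_entry)

lemma matrix_ode_solution:
  fixes P :: "real \<Rightarrow> real^'n^'n"
  assumes P': "\<And>r i j. ((\<lambda>r. P r $ i $ j) has_real_derivative (P r ** M) $ i $ j) (at r)"
  shows "P t = P 0 ** mexp (t *\<^sub>R M)"
proof -
  define Q where "Q r = mexp ((t + (-1) * r) *\<^sub>R M)" for r
  have "(P t ** Q t) $ i $ j = (P 0 ** Q 0) $ i $ j" for i j
  proof (rule DERIV_isconst_all[where f = "\<lambda>r. (P r ** Q r) $ i $ j"], rule allI)
    fix r
    have "((\<lambda>r. \<Sum>l\<in>UNIV. P r $ i $ l * Q r $ l $ j) has_real_derivative
        (\<Sum>l\<in>UNIV. P r $ i $ l * (-1 * (Q r ** M) $ l $ j) + (P r ** M) $ i $ l * Q r $ l $ j))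
        (at r)"
      unfolding Q_def by (intro DERIV_sum DERIV_mult' P' has_real_derivative_mexp_affine_entry)
    moreover have
      "(\<Sum>l\<in>UNIV. P r $ i $ l * (-1 * (Q r ** M) $ l $ j) + (P r ** M) $ i $ l * Q r $ l $ j)
        = ((P r ** M) ** Q r - P r ** (Q r ** M)) $ i $ j"
      by (simp add: matrix_matrix_mult_def sum_subtractf)
    moreover have "P r ** (Q r ** M) = (P r ** M) ** Q r"
      by (simp add: Q_def mexp_scaleR_mult_commute matrix_mul_assoc)
    ultimately have "((\<lambda>r. \<Sum>l\<in>UNIV. P r $ i $ l * Q r $ l $ j) has_real_derivative 0) (at r)"
      by simp
    then show "((\<lambda>r. (P r ** Q r) $ i $ j) has_real_derivative 0) (at r)"
      by (simp add: matrix_matrix_mult_def)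
  qed
  then show ?thesis
    by (simp add: Q_def vec_eq_iff)
qed

lemma mexp_scaleR_add: "mexp ((s + t) *\<^sub>R M) = mexp (s *\<^sub>R M) ** mexp (t *\<^sub>R M)"
  using matrix_ode_solution[of "\<lambda>r. mexp ((s + 1 * r) *\<^sub>R M)" M t]
    has_real_derivative_mexp_affine_entry[of s 1 M] by simp

lemma mexp_scaleR_shift:
  "mexp (t *\<^sub>R M) = exp (- c * t) *\<^sub>R mexp (t *\<^sub>R (M + c *\<^sub>R mat 1))"
proof -
  let ?B = "M + c *\<^sub>R mat 1"
  define P where "P r = exp (- c * r) *\<^sub>R mexp ((0 + 1 * r) *\<^sub>R ?B)" for r
  have "((\<lambda>r. P r $ i $ j) has_real_derivative (P r ** M) $ i $ j) (at r)" for r i j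
  proof -
    let ?E = "mexp ((0 + 1 * r) *\<^sub>R ?B)"
    have "((\<lambda>r. exp (- c * r) * mexp ((0 + 1 * r) *\<^sub>R ?B) $ i $ j) has_real_derivative
        exp (- c * r) * (1 * (?E ** ?B) $ i $ j) + (- c * exp (- c * r)) * ?E $ i $ j) (at r)"
      by (intro DERIV_mult' has_real_derivative_mexp_affine_entry)
        (auto intro!: derivative_eq_intros)
    moreover have "exp (- c * r) * (1 * (?E ** ?B) $ i $ j) + (- c * exp (- c * r)) * ?E $ i $ j
        = (P r ** M) $ i $ j"
      by (simp add: P_def matrix_add_ldistrib matrix_scalar_ac algebra_simps
          flip: scalar_matrix_assoc)
    ultimately show ?thesis
      by (simp add: P_def)
  qed
  from matrix_ode_solution[of P M t, OF this] show ?thesis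
    by (simp add: P_def)
qed

section \<open>Exponentials of Metzler matrices\<close>

lemma mexp_ge_mat1:
  assumes "nonneg_matrix M" and "0 \<le> t"
  shows "mat 1 $ i $ j \<le> mexp (t *\<^sub>R M) $ i $ j"
proof -
  define f where "f k = t ^ k / fact k * mpow M k $ i $ j" for k
  have entries: "f sums (mexp (t *\<^sub>R M) $ i $ j)"
    using sums_vec_nth[OF sums_vec_nth[OF mexp_scaleR_sums[of t M]], of i j]
      by (simp add: f_def[abs_def] mult_ac)
  have "sum f {0} \<le> suminf f"
    by (rule sum_le_suminf)
      (use entries assms in
        \<open>auto simp: sums_iff f_def intro!: mpow_nonneg divide_nonneg_pos mult_nonneg_nonneg\<close>)
  then show ?thesis
    using entries by (simp add: sums_iff f_def)
qed

lemma mexp_metzler_nonneg: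
  assumes "metzler M" and "0 \<le> t"
  shows "0 \<le> mexp (t *\<^sub>R M) $ i $ j" and "0 < mexp (t *\<^sub>R M) $ i $ i"
proof -
  define c where "c = (\<Sum>i\<in>UNIV. \<bar>M $ i $ i\<bar>)"
  have c: "\<bar>M $ i $ i\<bar> \<le> c" for i
    unfolding c_def by (rule member_le_sum) auto
  have "0 \<le> (M + c *\<^sub>R mat 1) $ i $ j" for i j
    using assms(1) c[of i] by (cases "i = j") (auto simp: metzler_def mat_def)
  then have B: "nonneg_matrix (M + c *\<^sub>R mat 1)"
    by (simp add: nonneg_matrix_def)
  have shift: "mexp (t *\<^sub>R M) $ i $ j = exp (- c * t) * mexp (t *\<^sub>R (M + c *\<^sub>R mat 1)) $ i $ j" for i j
    by (subst mexp_scaleR_shift[of t M c]) simp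
  show "0 \<le> mexp (t *\<^sub>R M) $ i $ j"
    unfolding shift using mexp_ge_mat1[OF B assms(2), of i j]
    by (intro mult_nonneg_nonneg) (auto simp: mat_def split: if_splits)
  show "0 < mexp (t *\<^sub>R M) $ i $ i"
    unfolding shift using mexp_ge_mat1[OF B assms(2), of i i]
    by (intro mult_pos_pos) (auto simp: mat_def)
qed

lemma row_mexp_le:
  assumes "metzler A" and "\<And>j. (lam v* A) $ j \<le> 0" and "0 \<le> s"
  shows "(lam v* mexp (s *\<^sub>R A)) $ j \<le> lam $ j"
proof -
  define g where "g t = (\<Sum>i\<in>UNIV. lam $ i * mexp (t *\<^sub>R A) $ i $ j)" for t
  have "g s \<le> g 0"
  proof (rule DERIV_nonpos_imp_nonincreasing[OF assms(3)])
    fix t :: real assume "0 \<le> t"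
    have "(g has_real_derivative (\<Sum>i\<in>UNIV. lam $ i * (mexp (t *\<^sub>R A) ** A) $ i $ j)) (at t)"
      unfolding g_def by (intro DERIV_sum DERIV_cmult has_real_derivative_mexp_entry)
    moreover have "(\<Sum>i\<in>UNIV. lam $ i * (mexp (t *\<^sub>R A) ** A) $ i $ j)
        = ((lam v* A) v* mexp (t *\<^sub>R A)) $ j"
      by (simp add: mexp_scaleR_mult_commute vector_matrix_mul_assoc
          flip: vector_matrix_mult_component)
    moreover have "((lam v* A) v* mexp (t *\<^sub>R A)) $ j \<le> (0 v* mexp (t *\<^sub>R A)) $ j"
      using assms \<open>0 \<le> t\<close> by (intro vector_matrix_mult_mono mexp_metzler_nonneg) auto
    ultimately show "\<exists>y. (g has_real_derivative y) (at t) \<and> y \<le> 0"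
      by auto
  qed
  then show ?thesis
    by (simp add: g_def flip: vector_matrix_mult_component)
qed

lemma row_mexp_le_supersolution:
  fixes z z' :: "real \<Rightarrow> real^'n"
  assumes A: "metzler A" and "0 \<le> T"
    and z': "\<forall>\<tau>\<in>{0..T}. (z has_vector_derivative z' \<tau>) (at \<tau> within {0..T})"
    and super: "\<forall>\<tau>\<in>{0..T}. \<forall>j. (z \<tau> v* A) $ j - z' \<tau> $ j \<le> 0"
  shows "(z 0 v* mexp (T *\<^sub>R A)) $ j \<le> z T $ j"
proof -
  define \<phi> where "\<phi> \<tau> = (\<Sum>i\<in>UNIV. z \<tau> $ i * mexp ((T + (-1) * \<tau>) *\<^sub>R A) $ i $ j)" for \<tau>
  have "continuous_on {0..T} z"
    using z' by (metis continuous_on_eq_continuous_within has_vector_derivative_continuous)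
  then have "continuous_on {0..T} \<phi>"
    unfolding \<phi>_def by (intro continuous_intros continuous_mexp_affine_entry)
  then have "\<phi> 0 \<le> \<phi> T"
  proof (rule DERIV_nonneg_imp_increasing_open[OF \<open>0 \<le> T\<close>, rotated])
    fix t assume t: "0 < t" "t < T"
    let ?E = "mexp ((T + (-1) * t) *\<^sub>R A)"
    have "(z has_vector_derivative z' t) (at t within {0..T})"
      using z' t by simp
    then have "(z has_vector_derivative z' t) (at t)"
      using at_within_Icc_at[OF t] by simp
    then have "((\<lambda>\<tau>. z \<tau> $ i) has_real_derivative z' t $ i) (at t)" for i
      by (simp add: has_vector_derivative_vec_nth_iff)
    then have "(\<phi> has_real_derivative
        (\<Sum>i\<in>UNIV. z t $ i * (-1 * (?E ** A) $ i $ j) + z' t $ i * ?E $ i $ j)) (at t)"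
      unfolding \<phi>_def by (intro DERIV_sum DERIV_mult' has_real_derivative_mexp_affine_entry)
    moreover have "((z t v* A) v* ?E) $ j = (\<Sum>i\<in>UNIV. z t $ i * (?E ** A) $ i $ j)"
      by (simp only: vector_matrix_mul_assoc mexp_scaleR_mult_commute vector_matrix_mult_component)
    then have "(\<Sum>i\<in>UNIV. z t $ i * (-1 * (?E ** A) $ i $ j) + z' t $ i * ?E $ i $ j)
        = (z' t v* ?E) $ j - ((z t v* A) v* ?E) $ j"
      by (simp add: vector_matrix_mult_component sum_subtractf)
    moreover have "((z t v* A) v* ?E) $ j \<le> (z' t v* ?E) $ j"
      using super t A by (intro vector_matrix_mult_mono mexp_metzler_nonneg) auto
    ultimately show "\<exists>y. (\<phi> has_real_derivative y) (at t) \<and> 0 \<le> y"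
      by auto
  qed
  then show ?thesis
    by (simp add: \<phi>_def flip: vector_matrix_mult_component)
qed

lemma dwell_contraction:
  assumes A: "metzler A" and lam: "pos_vec lam" and row_A: "\<And>j. (lam v* A) $ j \<le> 0"
    and jump: "\<And>j. (lam v* (J ** mexp (T *\<^sub>R A))) $ j < lam $ j"
  obtains q where "0 \<le> q" "q < 1"
    "\<And>\<theta> j. T \<le> \<theta> \<Longrightarrow> (lam v* (J ** mexp (\<theta> *\<^sub>R A))) $ j \<le> q * lam $ j"
proof -
  define ratio where "ratio j = (lam v* (J ** mexp (T *\<^sub>R A))) $ j / lam $ j" for j
  define q where "q = max 0 (Max (range ratio))"
  have lam_pos: "0 < lam $ j" for j
    using lam by (simp add: pos_vec_def)
  have "ratio j < 1" for j
    using jump[of j] lam_pos[of j] by (simp add: ratio_def)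
  then have "q < 1"
    by (simp add: q_def)
  have at_T: "(lam v* (J ** mexp (T *\<^sub>R A))) $ j \<le> q * lam $ j" for j
  proof -
    have "ratio j \<le> q"
      unfolding q_def by (rule max.coboundedI2) simp
    then show ?thesis
      using lam_pos[of j] by (simp add: ratio_def field_simps)
  qed
  have "(lam v* (J ** mexp (\<theta> *\<^sub>R A))) $ j \<le> q * lam $ j" if "T \<le> \<theta>" for \<theta> j
  proof -
    let ?E = "mexp ((\<theta> - T) *\<^sub>R A)"
    have "lam v* (J ** mexp (\<theta> *\<^sub>R A)) = (lam v* (J ** mexp (T *\<^sub>R A))) v* ?E"
      using mexp_scaleR_add[of T "\<theta> - T" A] by (simp add: vector_matrix_mul_assoc matrix_mul_assoc)
    also have "\<dots> $ j \<le> ((q *\<^sub>R lam) v* ?E) $ j"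
      using at_T A that by (intro vector_matrix_mult_mono mexp_metzler_nonneg) auto
    also have "\<dots> = q * (lam v* ?E) $ j"
      by (simp add: scaleR_vector_matrix_assoc)
    also have "\<dots> \<le> q * lam $ j"
      using A row_A that by (intro mult_left_mono row_mexp_le) (auto simp: q_def)
    finally show ?thesis .
  qed
  moreover have "0 \<le> q"
    by (simp add: q_def)
  ultimately show thesis
    using \<open>q < 1\<close> that by blast
qed

lemma cond_c_contraction:
  assumes "metzler A" and "cond_c A J T"
  obtains lam q where "pos_vec lam" "\<And>j. (lam v* A) $ j < 0" "0 \<le> q" "q < 1"
    "\<And>\<theta> j. T \<le> \<theta> \<Longrightarrow> (lam v* (J ** mexp (\<theta> *\<^sub>R A))) $ j \<le> q * lam $ j"
proof -
  obtain lam where lam: "pos_vec lam" and row_A: "\<And>j. (lam v* A) $ j < 0"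
    and jump: "\<And>j. (lam v* (J ** mexp (T *\<^sub>R A))) $ j - lam $ j < 0"
    using assms(2) unfolding cond_c_def by blast
  obtain q where "0 \<le> q" "q < 1"
    "\<And>\<theta> j. T \<le> \<theta> \<Longrightarrow> (lam v* (J ** mexp (\<theta> *\<^sub>R A))) $ j \<le> q * lam $ j"
    using dwell_contraction[OF assms(1) lam] row_A jump by (metis less_imp_le diff_less_0_iff_less)
  with lam row_A show thesis
    by (rule that)
qed

lemma cond_a_imp_b:
  fixes A J :: "real^'n^'n"
  assumes "cond_a A J T"
  shows "cond_b A J T"
proof -
  obtain lam mu nu where lam: "pos_vec lam" and "pos_vec mu" "pos_vec nu"
    and flow: "\<And>x. nonneg_vec x \<Longrightarrow> lam \<bullet> (A *v x) \<le> - (mu \<bullet> x)"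
    and jump: "\<And>x \<theta>. nonneg_vec x \<Longrightarrow> T \<le> \<theta> \<Longrightarrow>
                 lam \<bullet> ((J ** mexp (\<theta> *\<^sub>R A)) *v x) - lam \<bullet> x \<le> - (nu \<bullet> x)"
    using assms unfolding cond_a_def by blast
  have axis: "nonneg_vec (axis j (1::real))" for j :: 'n
    by (simp add: nonneg_vec_def axis_def)
  have "(lam v* A) $ j \<le> - mu $ j" for j
    using flow[OF axis] by (simp add: inner_matrix_vector_mult_axis inner_axis)
  moreover have "(lam v* (J ** mexp (\<theta> *\<^sub>R A))) $ j - lam $ j \<le> - nu $ j" if "T \<le> \<theta>" for \<theta> j
    using jump[OF axis that] by (simp add: inner_matrix_vector_mult_axis inner_axis)
  ultimately show ?thesis
    using lam \<open>pos_vec mu\<close> \<open>pos_vec nu\<close> unfolding cond_b_def pos_vec_def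
    by (meson neg_less_0_iff_less order_le_less_trans)
qed

lemma cond_b_imp_c: "cond_b A J T \<Longrightarrow> cond_c A J T"
  unfolding cond_b_def cond_c_def by blast

lemma cond_c_imp_a:
  assumes "metzler A" and "cond_c A J T"
  shows "cond_a A J T"
proof -
  obtain lam q where lam: "pos_vec lam" and row_A: "\<And>j. (lam v* A) $ j < 0" and "q < 1"
    and q: "\<And>\<theta> j. T \<le> \<theta> \<Longrightarrow> (lam v* (J ** mexp (\<theta> *\<^sub>R A))) $ j \<le> q * lam $ j"
    using cond_c_contraction[OF assms] by metis
  define mu where "mu = - (lam v* A)"
  define nu where "nu = (1 - q) *\<^sub>R lam"
  have "pos_vec mu" "pos_vec nu"
    using row_A lam \<open>q < 1\<close> by (simp_all add: mu_def nu_def pos_vec_def)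
  moreover have "lam \<bullet> (A *v x) \<le> - (mu \<bullet> x)" for x
    by (simp add: mu_def dot_lmul_matrix)
  moreover have "lam \<bullet> ((J ** mexp (\<theta> *\<^sub>R A)) *v x) - lam \<bullet> x \<le> - (nu \<bullet> x)"
    if "nonneg_vec x" "T \<le> \<theta>" for x \<theta>
  proof -
    have "lam \<bullet> ((J ** mexp (\<theta> *\<^sub>R A)) *v x) - lam \<bullet> x
        = (\<Sum>j\<in>UNIV. ((lam v* (J ** mexp (\<theta> *\<^sub>R A))) $ j - lam $ j) * x $ j)"
      by (simp only: dot_lmul_matrix[symmetric])
        (simp add: inner_vec_def sum_subtractf left_diff_distrib)
    also have "\<dots> \<le> (\<Sum>j\<in>UNIV. (- (1 - q) * lam $ j) * x $ j)"
      using q that by (intro sum_mono mult_right_mono) (auto simp: nonneg_vec_def algebra_simps)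
    also have "\<dots> = - (nu \<bullet> x)"
      by (simp add: nu_def inner_vec_def flip: sum_negf) (simp add: algebra_simps)
    finally show ?thesis .
  qed
  ultimately show ?thesis
    unfolding cond_a_def using lam by blast
qed

lemma cond_c_iff_d: "cond_c A J T \<longleftrightarrow> cond_d A J T"
  unfolding cond_c_def cond_d_def by (simp add: vector_matrix_mult_diff_rdistrib)

section \<open>Gordan's alternative and condition (e)\<close>

definition prob_vectors :: "(real^'k) set" where
  "prob_vectors = {c. (\<forall>k. 0 \<le> c $ k) \<and> sum (($) c) UNIV = 1}"

lemma compact_prob_vectors: "compact prob_vectors"
proof -
  have "bounded prob_vectors"
  proof (rule boundedI)
    fix c :: "real^'k" assume "c \<in> prob_vectors"
    then show "norm c \<le> 1"
      using norm_le_l1_cart[of c] by (simp add: prob_vectors_def)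
  qed
  moreover have "closed prob_vectors"
    unfolding prob_vectors_def
    by (intro closed_Collect_conj closed_Collect_all closed_Collect_le closed_Collect_eq
        continuous_intros)
  ultimately show ?thesis
    by (simp add: compact_eq_bounded_closed)
qed

lemma convex_prob_vectors: "convex prob_vectors"
proof (rule convexI)
  fix c d :: "real^'k" and u v :: real
  assume "c \<in> prob_vectors" "d \<in> prob_vectors" "0 \<le> u" "0 \<le> v" "u + v = 1"
  then show "u *\<^sub>R c + v *\<^sub>R d \<in> prob_vectors"
    by (simp add: prob_vectors_def sum.distrib flip: sum_distrib_left)
qed

lemma axis_in_prob_vectors: "axis k 1 \<in> prob_vectors"
  by (simp add: prob_vectors_def axis_def)

lemma gordan_alternative:
  fixes b :: "'k::finite \<Rightarrow> 'a::euclidean_space"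
  shows "(\<exists>y. \<forall>k. 0 < y \<bullet> b k) \<longleftrightarrow>
         (\<forall>c::real^'k. (\<forall>k. 0 \<le> c $ k) \<and> (\<Sum>k\<in>UNIV. c $ k *\<^sub>R b k) = 0 \<longrightarrow> c = 0)"
proof
  assume "\<exists>y. \<forall>k. 0 < y \<bullet> b k"
  then obtain y where y: "\<And>k. 0 < y \<bullet> b k"
    by blast
  show "\<forall>c. (\<forall>k. 0 \<le> c $ k) \<and> (\<Sum>k\<in>UNIV. c $ k *\<^sub>R b k) = 0 \<longrightarrow> c = 0"
  proof (intro allI impI, elim conjE)
    fix c :: "real^'k"
    assume c: "\<forall>k. 0 \<le> c $ k" and comb: "(\<Sum>k\<in>UNIV. c $ k *\<^sub>R b k) = 0"
    have "(\<Sum>k\<in>UNIV. c $ k * (y \<bullet> b k)) = y \<bullet> (\<Sum>k\<in>UNIV. c $ k *\<^sub>R b k)"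
      by (simp add: inner_sum_right)
    then have "(\<Sum>k\<in>UNIV. c $ k * (y \<bullet> b k)) = 0"
      by (simp add: comb)
    moreover have "\<forall>k\<in>UNIV. 0 \<le> c $ k * (y \<bullet> b k)"
      using c y by (simp add: less_imp_le)
    ultimately have "c $ k * (y \<bullet> b k) = 0" for k
      by (simp add: sum_nonneg_eq_0_iff)
    then show "c = 0"
      using y by (simp add: vec_eq_iff less_imp_neq[symmetric])
  qed
next
  assume trivial: "\<forall>c::real^'k. (\<forall>k. 0 \<le> c $ k) \<and> (\<Sum>k\<in>UNIV. c $ k *\<^sub>R b k) = 0 \<longrightarrow> c = 0"
  define f where "f c = (\<Sum>k\<in>UNIV. c $ k *\<^sub>R b k)" for c :: "real^'k"
  have "linear f"
    unfolding f_def by (intro linearI) (simp_all add: sum.distrib scaleR_add_left scaleR_sum_right)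
  then have "compact (f ` prob_vectors)" "convex (f ` prob_vectors)"
    by (simp_all add: compact_continuous_image linear_continuous_on linear_conv_bounded_linear
        compact_prob_vectors convex_linear_image convex_prob_vectors)
  moreover have "0 \<notin> f ` prob_vectors"
  proof
    assume "0 \<in> f ` prob_vectors"
    then obtain c where "c \<in> prob_vectors" "f c = 0"
      by auto
    with trivial show False
      by (auto simp: prob_vectors_def f_def)
  qed
  ultimately obtain a \<beta> where "0 < \<beta>" and sep: "\<forall>x\<in>f ` prob_vectors. \<beta> < a \<bullet> x"
    using separating_hyperplane_closed_0[of "f ` prob_vectors"] compact_imp_closed by blast
  have "f (axis k 1) = b k" for k
  proof -
    have "f (axis k 1) = (\<Sum>k'\<in>UNIV. if k' = k then b k' else 0)"
      unfolding f_def by (intro sum.cong) (auto simp: axis_def)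
    then show ?thesis
      by simp
  qed
  with axis_in_prob_vectors have "\<beta> < a \<bullet> b k" for k
    using sep by (metis image_eqI)
  then show "\<exists>y. \<forall>k. 0 < y \<bullet> b k"
    using \<open>0 < \<beta>\<close> by (meson order_less_trans)
qed

(* Vectors of R^(3n) are indexed by 'n + 'n + 'n; these are the columns of [I, -A, -N]. *)
definition block_columns :: "real^'n^'n \<Rightarrow> real^'n^'n \<Rightarrow> 'n + 'n + 'n \<Rightarrow> real^'n" where
  "block_columns A N k =
     (case k of Inl i \<Rightarrow> axis i 1 | Inr (Inl i) \<Rightarrow> - column i A | Inr (Inr i) \<Rightarrow> - column i N)"

lemma block_columns_combination:
  "(\<Sum>k\<in>UNIV. c $ k *\<^sub>R block_columns A N k) =
     (\<chi> i. c $ Inl i) - A *v (\<chi> i. c $ Inr (Inl i)) - N *v (\<chi> i. c $ Inr (Inr i))"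
  by (simp add: vec_eq_iff sum_UNIV_Plus block_columns_def axis_def column_def
      matrix_vector_mult_def sum_negf if_distrib mult.commute cong: if_cong)

lemma inner_block_columns [simp]:
  "y \<bullet> block_columns A N (Inl i) = y $ i"
  "y \<bullet> block_columns A N (Inr (Inl i)) = - (y v* A) $ i"
  "y \<bullet> block_columns A N (Inr (Inr i)) = - (y v* N) $ i"
  by (simp_all add: block_columns_def inner_axis
      flip: matrix_vector_mult_basis inner_matrix_vector_mult_axis)

lemma cond_d_iff_block_columns:
  "cond_d A J T \<longleftrightarrow> (\<exists>y. \<forall>k. 0 < y \<bullet> block_columns A (J ** mexp (T *\<^sub>R A) - mat 1) k)"
  by (simp add: cond_d_def pos_vec_def split_sum_all)

lemma cond_e_iff_block_columns:
  fixes A J :: "real^'n^'n"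
  shows "cond_e A J T \<longleftrightarrow> (\<forall>c. (\<forall>k. 0 \<le> c $ k) \<and>
     (\<Sum>k\<in>UNIV. c $ k *\<^sub>R block_columns A (J ** mexp (T *\<^sub>R A) - mat 1) k) = 0 \<longrightarrow> c = 0)"
  (is "_ \<longleftrightarrow> (\<forall>c. ?nonneg c \<and> ?comb c = 0 \<longrightarrow> c = 0)")
proof
  assume e: "cond_e A J T"
  show "\<forall>c. ?nonneg c \<and> ?comb c = 0 \<longrightarrow> c = 0"
  proof (intro allI impI)
    fix c :: "real^('n + 'n + 'n)"
    assume "?nonneg c \<and> ?comb c = 0"
    then have "(\<chi> i. c $ Inl i) = 0 \<and> (\<chi> i. c $ Inr (Inl i)) = 0 \<and> (\<chi> i. c $ Inr (Inr i)) = 0"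
      using e[unfolded cond_e_def, rule_format,
          of "\<chi> i. c $ Inl i" "\<chi> i. c $ Inr (Inl i)" "\<chi> i. c $ Inr (Inr i)"]
      unfolding block_columns_combination by (simp add: nonneg_vec_def)
    then show "c = 0"
      by (simp add: vec_eq_iff split_sum_all)
  qed
next
  assume trivial: "\<forall>c. ?nonneg c \<and> ?comb c = 0 \<longrightarrow> c = 0"
  show "cond_e A J T"
    unfolding cond_e_def
  proof (intro allI impI)
    fix u v w :: "real^'n"
    define c :: "real^('n + 'n + 'n)" where
      "c = (\<chi> k. case k of Inl i \<Rightarrow> u $ i | Inr (Inl i) \<Rightarrow> v $ i | Inr (Inr i) \<Rightarrow> w $ i)"
    have parts: "(\<chi> i. c $ Inl i) = u" "(\<chi> i. c $ Inr (Inl i)) = v" "(\<chi> i. c $ Inr (Inr i)) = w"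
      by (simp_all add: c_def vec_eq_iff)
    assume "nonneg_vec u \<and> nonneg_vec v \<and> nonneg_vec w \<and>
      u - A *v v - (J ** mexp (T *\<^sub>R A) - mat 1) *v w = 0"
    then have "c = 0"
      using trivial unfolding block_columns_combination parts
      by (auto simp: nonneg_vec_def c_def split_sum_all)
    then show "u = 0 \<and> v = 0 \<and> w = 0"
      by (simp add: vec_eq_iff flip: parts)
  qed
qed

lemma cond_d_iff_e: "cond_d A J T \<longleftrightarrow> cond_e A J T"
  unfolding cond_d_iff_block_columns cond_e_iff_block_columns by (rule gordan_alternative)

lemma cond_c_imp_f:
  fixes A J :: "real^'n^'n"
  assumes "cond_c A J T"
  shows "cond_f A J T"
proof -
  obtain lam where lam: "pos_vec lam" and row_A: "\<And>j. (lam v* A) $ j < 0"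
    and jump: "\<And>j. (lam v* (J ** mexp (T *\<^sub>R A))) $ j - lam $ j < 0"
    using assms unfolding cond_c_def by blast
  define w where "w = lam v* J"
  define v where "v = lam - lam v* (J ** mexp (T *\<^sub>R A))"
  define c where "c = Max (range (\<lambda>j. (v v* A) $ j / v $ j))"
  \<comment> \<open>The first summand of z solves the adjoint equation z' = z A exactly, the second is a
    supersolution because v A \<le> c v, and z T = lam.\<close>
  define z where "z \<tau> = w v* mexp (\<tau> *\<^sub>R A) + exp (c * (\<tau> - T)) *\<^sub>R v" for \<tau>
  define z' where "z' \<tau> = w v* (mexp (\<tau> *\<^sub>R A) ** A) + (c * exp (c * (\<tau> - T))) *\<^sub>R v" for \<tau>
  define \<epsilon> where "\<epsilon> = exp (- (c * T)) * Min (range (($) v))"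
  have v_pos: "0 < v $ j" for j
    using jump[of j] by (simp add: v_def)
  have row_v: "(v v* A) $ j \<le> c * v $ j" for j
  proof -
    have "(v v* A) $ j / v $ j \<le> c"
      unfolding c_def by (rule Max_ge) auto
    then show ?thesis
      using v_pos[of j] by (simp add: field_simps)
  qed
  have "0 < \<epsilon>"
    using v_pos by (simp add: \<epsilon>_def)
  have "(z has_vector_derivative z' \<tau>) (at \<tau> within {0..T})" for \<tau>
    unfolding z_def z'_def by (auto intro!: derivative_eq_intros has_vector_derivative_row_mexp)
  moreover have "z T = lam"
    by (simp add: z_def w_def v_def vector_matrix_mul_assoc)
  moreover have "(z \<tau> v* A) $ j - z' \<tau> $ j \<le> 0" for \<tau> j
  proof -
    have "(z \<tau> v* A) $ j - z' \<tau> $ j = exp (c * (\<tau> - T)) * ((v v* A) $ j - c * v $ j)"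
      by (simp add: z_def z'_def scaleR_vector_matrix_assoc
          vector_matrix_mul_assoc mexp_scaleR_mult_commute algebra_simps)
    also have "\<dots> \<le> 0"
      using row_v[of j] by (simp add: mult_nonneg_nonpos)
    finally show ?thesis .
  qed
  moreover have "(z T v* J) $ j - z 0 $ j + \<epsilon> \<le> 0" for j
  proof -
    have "Min (range (($) v)) \<le> v $ j"
      by (rule Min_le) auto
    then show ?thesis
      by (simp add: \<open>z T = lam\<close>) (simp add: z_def w_def \<epsilon>_def)
  qed
  ultimately show ?thesis
    unfolding cond_f_def using lam row_A \<open>0 < \<epsilon>\<close>
    by (intro exI[of _ z] exI[of _ z'] exI[of _ \<epsilon>]) auto
qed

lemma cond_f_imp_c:
  fixes A J :: "real^'n^'n"
  assumes A: "metzler A" and "0 < T" and "cond_f A J T"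
  shows "cond_c A J T"
proof -
  obtain z z' \<epsilon> where z': "\<forall>\<tau>\<in>{0..T}. (z has_vector_derivative z' \<tau>) (at \<tau> within {0..T})"
    and pos: "pos_vec (z T)" and "0 < \<epsilon>" and row_A: "\<forall>j. (z T v* A) $ j < 0"
    and super: "\<forall>\<tau>\<in>{0..T}. \<forall>j. (z \<tau> v* A) $ j - z' \<tau> $ j \<le> 0"
    and jump: "\<forall>j. (z T v* J) $ j - z 0 $ j + \<epsilon> \<le> 0"
    using assms(3) unfolding cond_f_def by blast
  let ?E = "mexp (T *\<^sub>R A)"
  have E_nonneg: "0 \<le> ?E $ i $ k" for i k
    using A \<open>0 < T\<close> by (simp add: mexp_metzler_nonneg)
  have "(z T v* (J ** ?E)) $ j < z T $ j" for j
  proof -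
    have "(z T v* (J ** ?E)) $ j = ((z T v* J) v* ?E) $ j"
      by (simp add: vector_matrix_mul_assoc)
    also have "\<dots> \<le> ((\<chi> i. z 0 $ i - \<epsilon>) v* ?E) $ j"
      using jump E_nonneg by (intro vector_matrix_mult_mono) (simp add: algebra_simps)
    also have "\<dots> = (z 0 v* ?E) $ j - \<epsilon> * (\<Sum>i\<in>UNIV. ?E $ i $ j)"
      by (simp add: vector_matrix_mult_component left_diff_distrib sum_subtractf sum_distrib_left)
    also have "\<dots> < z T $ j"
    proof -
      have "0 < ?E $ j $ j"
        using A \<open>0 < T\<close> by (simp add: mexp_metzler_nonneg)
      also have "\<dots> \<le> (\<Sum>i\<in>UNIV. ?E $ i $ j)"
        using E_nonneg by (intro member_le_sum) auto
      finally have "0 < \<epsilon> * (\<Sum>i\<in>UNIV. ?E $ i $ j)"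
        using \<open>0 < \<epsilon>\<close> by simp
      moreover have "(z 0 v* ?E) $ j \<le> z T $ j"
        using \<open>0 < T\<close> by (intro row_mexp_le_supersolution[OF A _ z' super]) simp
      ultimately show ?thesis
        by linarith
    qed
    finally show ?thesis .
  qed
  then show ?thesis
    unfolding cond_c_def using pos row_A by auto
qed

lemma has_vector_derivative_reflect:
  assumes "\<forall>\<tau>\<in>{0..T}. (g has_vector_derivative g' \<tau>) (at \<tau> within {0..T})"
  shows "\<forall>\<tau>\<in>{0..T}. ((\<lambda>\<tau>. g (T - \<tau>)) has_vector_derivative - g' (T - \<tau>)) (at \<tau> within {0..T::real})"
proof
  fix \<tau> assume "\<tau> \<in> {0..T}"
  have "((-) T has_vector_derivative -1) (at \<tau> within {0..T})"
    by (auto intro!: derivative_eq_intros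
        simp: has_real_derivative_iff_has_vector_derivative[symmetric])
  moreover have "(g has_vector_derivative g' (T - \<tau>)) (at (T - \<tau>) within (-) T ` {0..T})"
    using assms \<open>\<tau> \<in> {0..T}\<close> by simp
  ultimately show "((\<lambda>\<tau>. g (T - \<tau>)) has_vector_derivative - g' (T - \<tau>)) (at \<tau> within {0..T})"
    using vector_diff_chain_within by (fastforce simp: o_def)
qed

lemma cond_f_imp_g:
  fixes A J :: "real^'n^'n"
  shows "cond_f A J T \<Longrightarrow> cond_g A J T"
  unfolding cond_f_def cond_g_def
proof (elim exE conjE)
  fix z z' :: "real \<Rightarrow> real^'n" and \<epsilon> :: real
  assume "\<forall>\<tau>\<in>{0..T}. (z has_vector_derivative z' \<tau>) (at \<tau> within {0..T})"
  then have "\<forall>\<tau>\<in>{0..T}. ((\<lambda>\<tau>. z (T - \<tau>)) has_vector_derivative - z' (T - \<tau>)) (at \<tau> within {0..T})"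
    by (rule has_vector_derivative_reflect)
  moreover assume "pos_vec (z T)" "0 < \<epsilon>" "\<forall>j. (z T v* A) $ j < 0"
    "\<forall>\<tau>\<in>{0..T}. \<forall>j. (z \<tau> v* A) $ j - z' \<tau> $ j \<le> 0"
    "\<forall>j. (z T v* J) $ j - z 0 $ j + \<epsilon> \<le> 0"
  ultimately show "\<exists>\<xi> \<xi>' \<epsilon>. (\<forall>\<tau>\<in>{0..T}. (\<xi> has_vector_derivative \<xi>' \<tau>) (at \<tau> within {0..T})) \<and>
      pos_vec (\<xi> 0) \<and> 0 < \<epsilon> \<and> (\<forall>j. (\<xi> 0 v* A) $ j < 0) \<and>
      (\<forall>\<tau>\<in>{0..T}. \<forall>j. (\<xi> \<tau> v* A) $ j + \<xi>' \<tau> $ j \<le> 0) \<and>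
      (\<forall>j. (\<xi> 0 v* J) $ j - \<xi> T $ j + \<epsilon> \<le> 0)"
    by (intro exI[of _ "\<lambda>\<tau>. z (T - \<tau>)"] exI[of _ "\<lambda>\<tau>. - z' (T - \<tau>)"] exI[of _ \<epsilon>]) auto
qed

lemma cond_g_imp_f:
  fixes A J :: "real^'n^'n"
  shows "cond_g A J T \<Longrightarrow> cond_f A J T"
  unfolding cond_f_def cond_g_def
proof (elim exE conjE)
  fix \<xi> \<xi>' :: "real \<Rightarrow> real^'n" and \<epsilon> :: real
  assume "\<forall>\<tau>\<in>{0..T}. (\<xi> has_vector_derivative \<xi>' \<tau>) (at \<tau> within {0..T})"
  then have "\<forall>\<tau>\<in>{0..T}. ((\<lambda>\<tau>. \<xi> (T - \<tau>)) has_vector_derivative - \<xi>' (T - \<tau>)) (at \<tau> within {0..T})"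
    by (rule has_vector_derivative_reflect)
  moreover assume "pos_vec (\<xi> 0)" "0 < \<epsilon>" "\<forall>j. (\<xi> 0 v* A) $ j < 0"
    "\<forall>\<tau>\<in>{0..T}. \<forall>j. (\<xi> \<tau> v* A) $ j + \<xi>' \<tau> $ j \<le> 0"
    "\<forall>j. (\<xi> 0 v* J) $ j - \<xi> T $ j + \<epsilon> \<le> 0"
  ultimately show "\<exists>\<zeta> \<zeta>' \<epsilon>. (\<forall>\<tau>\<in>{0..T}. (\<zeta> has_vector_derivative \<zeta>' \<tau>) (at \<tau> within {0..T})) \<and>
      pos_vec (\<zeta> T) \<and> 0 < \<epsilon> \<and> (\<forall>j. (\<zeta> T v* A) $ j < 0) \<and>
      (\<forall>\<tau>\<in>{0..T}. \<forall>j. (\<zeta> \<tau> v* A) $ j - \<zeta>' \<tau> $ j \<le> 0) \<and>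
      (\<forall>j. (\<zeta> T v* J) $ j - \<zeta> 0 $ j + \<epsilon> \<le> 0)"
    by (intro exI[of _ "\<lambda>\<tau>. \<xi> (T - \<tau>)"] exI[of _ "\<lambda>\<tau>. - \<xi>' (T - \<tau>)"] exI[of _ \<epsilon>]) auto
qed

section \<open>Stability under the minimum dwell time\<close>

lemma linear_ode_flow:
  fixes x :: "real \<Rightarrow> real^'n"
  assumes "r \<le> s" and cont: "continuous_on {r..s} x"
    and x': "\<And>\<tau>. r < \<tau> \<Longrightarrow> \<tau> < s \<Longrightarrow> (x has_vector_derivative A *v x \<tau>) (at \<tau>)"
  shows "x s = mexp ((s - r) *\<^sub>R A) *v x r"
proof (cases "r = s")
  case False
  have "x s $ i = (mexp ((s - r) *\<^sub>R A) *v x r) $ i" for i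
  proof -
    define g where "g \<tau> = (\<Sum>l\<in>UNIV. mexp ((s + (-1) * \<tau>) *\<^sub>R A) $ i $ l * x \<tau> $ l)" for \<tau>
    have "g s = g r"
    proof (rule DERIV_isconst_end[where f = g])
      show "r < s"
        using \<open>r \<le> s\<close> False by simp
      show "continuous_on {r..s} g"
        unfolding g_def by (intro continuous_intros continuous_mexp_affine_entry cont)
    next
      fix \<tau> assume \<tau>: "r < \<tau>" "\<tau> < s"
      let ?E = "mexp ((s + (-1) * \<tau>) *\<^sub>R A)"
      have "((\<lambda>\<tau>. x \<tau> $ l) has_real_derivative (A *v x \<tau>) $ l) (at \<tau>)" for l
        using x'[OF \<tau>] by (simp add: has_vector_derivative_vec_nth_iff)
      then have "(g has_real_derivative
          (\<Sum>l\<in>UNIV. ?E $ i $ l * (A *v x \<tau>) $ l + -1 * (?E ** A) $ i $ l * x \<tau> $ l)) (at \<tau>)"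
        unfolding g_def by (intro DERIV_sum DERIV_mult' has_real_derivative_mexp_affine_entry)
      moreover have "(\<Sum>l\<in>UNIV. ?E $ i $ l * (A *v x \<tau>) $ l) = ((?E ** A) *v x \<tau>) $ i"
        by (simp only: matrix_vector_mul_assoc[symmetric] matrix_vector_mult_component[of ?E])
      ultimately show "(g has_real_derivative 0) (at \<tau>)"
        by (simp add: sum_subtractf matrix_vector_mult_component)
    qed
    then show ?thesis
      by (simp add: g_def matrix_vector_mult_component
          flip: matrix_vector_mult_component[of "mat 1"])
  qed
  then show ?thesis
    by (simp add: vec_eq_iff)
qed simp

lemma impulsive_solution_on_interval:
  fixes x :: "real \<Rightarrow> real^'n"
  assumes sol: "impulsive_solution A J t x0 x" and "t k < s" "s \<le> t (Suc k)"
  shows "x s = mexp ((s - t k) *\<^sub>R A) *v (J *v x (t k))"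
proof -
  define E where "E r = mexp ((s + (-1) * r) *\<^sub>R A)" for r
  have cont: "continuous_on {t k<..t (Suc k)} x"
    and x': "\<forall>r\<in>{t k<..<t (Suc k)}. (x has_vector_derivative A *v x r) (at r)"
    and jump: "(x \<longlongrightarrow> J *v x (t k)) (at_right (t k))"
    using sol unfolding impulsive_solution_def by auto
  have flow: "x s = E r *v x r" if "t k < r" "r < s" for r
  proof -
    have "x s = mexp ((s - r) *\<^sub>R A) *v x r"
      using that \<open>s \<le> t (Suc k)\<close> x'
      by (intro linear_ode_flow continuous_on_subset[OF cont]) auto
    then show ?thesis
      by (simp add: E_def)
  qed
  have "((\<lambda>r. E r *v x r) \<longlongrightarrow> E (t k) *v (J *v x (t k))) (at_right (t k))"
  proof (rule vec_tendstoI)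
    fix i
    have "isCont (\<lambda>r. E r $ i $ l) (t k)" for l
      unfolding E_def using has_real_derivative_mexp_affine_entry DERIV_isCont by blast
    then have E_lim: "((\<lambda>r. E r $ i $ l) \<longlongrightarrow> E (t k) $ i $ l) (at_right (t k))" for l
      by (simp add: isCont_def filterlim_at_split)
    have "((\<lambda>r. \<Sum>l\<in>UNIV. E r $ i $ l * x r $ l) \<longlongrightarrow>
        (\<Sum>l\<in>UNIV. E (t k) $ i $ l * (J *v x (t k)) $ l)) (at_right (t k))"
      by (intro tendsto_sum tendsto_mult E_lim tendsto_vec_nth[OF jump])
    then show "((\<lambda>r. (E r *v x r) $ i) \<longlongrightarrow> (E (t k) *v (J *v x (t k))) $ i) (at_right (t k))"
      by (simp only: matrix_vector_mult_component)
  qed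
  moreover have "\<forall>\<^sub>F r in at_right (t k). E r *v x r = x s"
    unfolding eventually_at_right[OF \<open>t k < s\<close>] using flow \<open>t k < s\<close> by (intro exI[of _ s]) auto
  ultimately have "((\<lambda>r. x s) \<longlongrightarrow> E (t k) *v (J *v x (t k))) (at_right (t k))"
    by (rule Lim_transform_eventually)
  then show ?thesis
    by (simp add: E_def tendsto_const_iff[OF trivial_limit_at_right_real])
qed

(* The copositive Lyapunov function lam^T x, extended to all of R^n as lam^T |x|. *)
definition weighted_l1 :: "real^'n \<Rightarrow> real^'n \<Rightarrow> real" where
  "weighted_l1 lam z = (\<Sum>i\<in>UNIV. lam $ i * \<bar>z $ i\<bar>)"

lemma weighted_l1_matrix_vector_mult_le:
  assumes "\<And>i j. 0 \<le> P $ i $ j" and "\<And>i. 0 \<le> lam $ i"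
  shows "weighted_l1 lam (P *v z) \<le> weighted_l1 (lam v* P) z"
proof -
  have "weighted_l1 lam (P *v z) \<le> (\<Sum>i\<in>UNIV. lam $ i * (\<Sum>l\<in>UNIV. P $ i $ l * \<bar>z $ l\<bar>))"
    unfolding weighted_l1_def matrix_vector_mult_component
    using assms by (intro sum_mono mult_left_mono order_trans[OF sum_abs]) (simp_all add: abs_mult)
  also have "\<dots> = weighted_l1 (lam v* P) z"
    unfolding weighted_l1_def vector_matrix_mult_component sum_distrib_left sum_distrib_right
    by (subst sum.swap) (simp add: mult_ac)
  finally show ?thesis .
qed

lemma weighted_l1_mono: "(\<And>i. lam $ i \<le> mu $ i) \<Longrightarrow> weighted_l1 lam z \<le> weighted_l1 mu z"
  unfolding weighted_l1_def by (intro sum_mono mult_right_mono) auto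

lemma weighted_l1_scaleR: "weighted_l1 (q *\<^sub>R lam) z = q * weighted_l1 lam z"
  by (simp add: weighted_l1_def sum_distrib_left mult.assoc)

lemma norm_le_weighted_l1:
  assumes "pos_vec lam"
  shows "Min (range (($) lam)) * norm z \<le> weighted_l1 lam z"
proof -
  let ?m = "Min (range (($) lam))"
  have "0 \<le> ?m"
    using assms by (simp add: pos_vec_def less_imp_le)
  then have "?m * norm z \<le> ?m * (\<Sum>i\<in>UNIV. \<bar>z $ i\<bar>)"
    by (intro mult_left_mono norm_le_l1_cart)
  also have "\<dots> = (\<Sum>i\<in>UNIV. ?m * \<bar>z $ i\<bar>)"
    by (simp add: sum_distrib_left)
  also have "\<dots> \<le> weighted_l1 lam z"
    unfolding weighted_l1_def by (intro sum_mono mult_right_mono Min_le) auto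
  finally show ?thesis .
qed

lemma weighted_l1_le_norm:
  assumes "\<And>i. 0 \<le> lam $ i"
  shows "weighted_l1 lam z \<le> (\<Sum>i\<in>UNIV. lam $ i) * norm z"
  unfolding weighted_l1_def sum_distrib_right
  using assms by (intro sum_mono mult_left_mono component_le_norm_cart)

lemma weighted_l1_mexp_le:
  assumes "metzler A" and "\<And>i. 0 \<le> lam $ i" and "\<And>j. (lam v* A) $ j \<le> 0" and "0 \<le> r"
  shows "weighted_l1 lam (mexp (r *\<^sub>R A) *v y) \<le> weighted_l1 lam y"
  using assms
  by (intro order_trans[OF weighted_l1_matrix_vector_mult_le] weighted_l1_mono row_mexp_le
      mexp_metzler_nonneg)

lemma weighted_l1_jump_le:
  assumes A: "metzler A" and J: "nonneg_matrix J" and "\<And>i. 0 \<le> lam $ i"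
    and "\<And>j. (lam v* (J ** mexp (\<theta> *\<^sub>R A))) $ j \<le> q * lam $ j" and "0 \<le> \<theta>"
  shows "weighted_l1 lam (J *v (mexp (\<theta> *\<^sub>R A) *v y)) \<le> q * weighted_l1 lam y"
proof -
  have "0 \<le> (J ** mexp (\<theta> *\<^sub>R A)) $ i $ j" for i j
    using J A \<open>0 \<le> \<theta>\<close>
    by (auto simp: matrix_matrix_mult_def nonneg_matrix_def
        intro!: sum_nonneg mult_nonneg_nonneg mexp_metzler_nonneg)
  then have "weighted_l1 lam ((J ** mexp (\<theta> *\<^sub>R A)) *v y) \<le> weighted_l1 (q *\<^sub>R lam) y"
    using assms by (intro order_trans[OF weighted_l1_matrix_vector_mult_le] weighted_l1_mono) auto
  then show ?thesis
    by (simp add: matrix_vector_mul_assoc weighted_l1_scaleR)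
qed

lemma impulsive_solution_geometric_decay:
  fixes A J :: "real^'n^'n"
  assumes A: "metzler A" and J: "nonneg_matrix J" and lam: "pos_vec lam"
    and row_A: "\<And>j. (lam v* A) $ j \<le> 0" and "0 \<le> q"
    and contraction: "\<And>\<theta> j. T \<le> \<theta> \<Longrightarrow> (lam v* (J ** mexp (\<theta> *\<^sub>R A))) $ j \<le> q * lam $ j"
    and adm: "dwell_admissible T t" and sol: "impulsive_solution A J t x0 x"
    and "t k < s" "s \<le> t (Suc k)"
  shows "Min (range (($) lam)) * norm (x s) \<le> q ^ k * weighted_l1 (lam v* J) x0"
proof -
  have lam_nonneg: "0 \<le> lam $ i" for i
    using lam by (simp add: pos_vec_def less_imp_le)
  have dwell: "T \<le> t (Suc k) - t k" "t k < t (Suc k)" for k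
    using adm by (auto simp: dwell_admissible_def strict_mono_def)
  have after_jump: "weighted_l1 lam (J *v x (t k)) \<le> q ^ k * weighted_l1 (lam v* J) x0" for k
  proof (induction k)
    case 0
    have "x (t 0) = x0"
      using sol by (simp add: impulsive_solution_def)
    then show ?case
      using J lam_nonneg by (simp add: weighted_l1_matrix_vector_mult_le nonneg_matrix_def)
  next
    case (Suc k)
    have "x (t (Suc k)) = mexp ((t (Suc k) - t k) *\<^sub>R A) *v (J *v x (t k))"
      using dwell(2) by (intro impulsive_solution_on_interval[OF sol]) auto
    then have "weighted_l1 lam (J *v x (t (Suc k))) \<le> q * weighted_l1 lam (J *v x (t k))"
      using weighted_l1_jump_le[OF A J lam_nonneg contraction] dwell[of k] by simp
    also have "\<dots> \<le> q * (q ^ k * weighted_l1 (lam v* J) x0)"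
      using Suc.IH \<open>0 \<le> q\<close> by (rule mult_left_mono)
    finally show ?case
      by simp
  qed
  have "Min (range (($) lam)) * norm (x s) \<le> weighted_l1 lam (x s)"
    by (rule norm_le_weighted_l1[OF lam])
  also have "\<dots> \<le> weighted_l1 lam (J *v x (t k))"
    using impulsive_solution_on_interval[OF sol \<open>t k < s\<close> \<open>s \<le> t (Suc k)\<close>] \<open>t k < s\<close>
      weighted_l1_mexp_le[OF A lam_nonneg row_A]
    by simp
  also have "\<dots> \<le> q ^ k * weighted_l1 (lam v* J) x0"
    by (rule after_jump)
  finally show ?thesis .
qed

lemma impulse_interval_exists:
  assumes "dwell_admissible T t" and "t 0 < s"
  obtains k where "t k < s" "s \<le> t (Suc k)"
proof -
  have "\<forall>\<^sub>F n in sequentially. s \<le> t n"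
    using assms(1) by (simp add: dwell_admissible_def filterlim_at_top)
  then obtain n where "s \<le> t n"
    by (auto simp: eventually_sequentially)
  define n0 where "n0 = (LEAST n. s \<le> t n)"
  have "s \<le> t n0"
    unfolding n0_def using \<open>s \<le> t n\<close> by (rule LeastI)
  moreover have "n0 \<noteq> 0"
  proof
    assume "n0 = 0"
    then show False
      using \<open>s \<le> t n0\<close> assms(2) by simp
  qed
  then obtain k where "n0 = Suc k"
    using not0_implies_Suc by blast
  moreover have "\<not> s \<le> t k"
    using not_less_Least[of k "\<lambda>n. s \<le> t n"] \<open>n0 = Suc k\<close> by (simp add: n0_def)
  ultimately show thesis
    by (intro that[of k]) auto
qed

lemma impulse_index_le:
  assumes "dwell_admissible T t" and "t N < s" and "s \<le> t (Suc k)"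
  shows "N \<le> k"
proof (rule ccontr)
  assume "\<not> N \<le> k"
  then have "t (Suc k) \<le> t N"
    using assms(1) by (simp add: dwell_admissible_def strict_mono_less_eq)
  then show False
    using assms(2,3) by simp
qed

lemma impulsive_stable_if_geometric_bound:
  assumes adm: "dwell_admissible T t" and "0 \<le> C" "0 \<le> q" "q < 1" and "0 < \<epsilon>"
    and bound: "\<And>x0 x k s. impulsive_solution A J t x0 x \<Longrightarrow> t k < s \<Longrightarrow> s \<le> t (Suc k) \<Longrightarrow>
      norm (x s) \<le> C * q ^ k * norm x0"
  shows "\<exists>\<delta>>0. \<forall>x0 x. norm x0 < \<delta> \<and> impulsive_solution A J t x0 x \<longrightarrow> (\<forall>s\<ge>t 0. norm (x s) < \<epsilon>)"
proof -
  have uniform: "norm (x s) \<le> (C + 1) * norm x0"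
    if sol: "impulsive_solution A J t x0 x" and "t 0 \<le> s" for x0 x s
  proof (cases "s = t 0")
    case True
    then show ?thesis
      using sol \<open>0 \<le> C\<close> by (simp add: impulsive_solution_def algebra_simps)
  next
    case False
    with \<open>t 0 \<le> s\<close> have "t 0 < s"
      by simp
    then obtain k where k: "t k < s" "s \<le> t (Suc k)"
      by (rule impulse_interval_exists[OF adm])
    have "q ^ k \<le> 1"
      using \<open>0 \<le> q\<close> \<open>q < 1\<close> by (simp add: power_le_one)
    then have "C * q ^ k \<le> C + 1"
      using \<open>0 \<le> C\<close> mult_left_le[of "q ^ k" C] by simp
    then have "C * q ^ k * norm x0 \<le> (C + 1) * norm x0"
      by (rule mult_right_mono) simp
    then show ?thesis
      using bound[OF sol k] by linarith
  qed
  show ?thesis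
  proof (intro exI conjI allI impI)
    show "0 < \<epsilon> / (C + 1)"
      using \<open>0 < \<epsilon>\<close> \<open>0 \<le> C\<close> by simp
    fix x0 x s assume "norm x0 < \<epsilon> / (C + 1) \<and> impulsive_solution A J t x0 x" "t 0 \<le> s"
    then show "norm (x s) < \<epsilon>"
      using uniform[of x0 x s] \<open>0 \<le> C\<close> by (simp add: field_simps)
  qed
qed

lemma impulsive_attractive_if_geometric_bound:
  assumes adm: "dwell_admissible T t" and "0 \<le> C" "0 \<le> q" "q < 1"
    and sol: "impulsive_solution A J t x0 x"
    and bound: "\<And>k s. t k < s \<Longrightarrow> s \<le> t (Suc k) \<Longrightarrow> norm (x s) \<le> C * q ^ k * norm x0"
  shows "(x \<longlongrightarrow> 0) at_top"
proof (rule tendstoI)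
  fix e :: real assume "0 < e"
  have "(\<lambda>N. q ^ N * (C * norm x0)) \<longlonglongrightarrow> 0 * (C * norm x0)"
    using \<open>0 \<le> q\<close> \<open>q < 1\<close> by (intro tendsto_mult LIMSEQ_power_zero) auto
  then have "\<forall>\<^sub>F N in sequentially. q ^ N * (C * norm x0) < e"
    using \<open>0 < e\<close> by (intro order_tendstoD(2)) auto
  then obtain N where N: "q ^ N * (C * norm x0) < e"
    by (auto simp: eventually_sequentially)
  have "dist (x s) 0 < e" if "t N < s" for s
  proof -
    have "t 0 \<le> t N"
      using adm by (simp add: dwell_admissible_def strict_mono_less_eq)
    with \<open>t N < s\<close> have "t 0 < s"
      by simp
    then obtain k where k: "t k < s" "s \<le> t (Suc k)"
      by (rule impulse_interval_exists[OF adm])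
    have "q ^ k \<le> q ^ N"
      using impulse_index_le[OF adm \<open>t N < s\<close> k(2)] \<open>0 \<le> q\<close> \<open>q < 1\<close> by (simp add: power_decreasing)
    then have "q ^ k * (C * norm x0) \<le> q ^ N * (C * norm x0)"
      using \<open>0 \<le> C\<close> by (intro mult_right_mono) auto
    then show ?thesis
      using bound[OF k] N by (simp add: mult_ac)
  qed
  then show "\<forall>\<^sub>F s in at_top. dist (x s) 0 < e"
    using eventually_gt_at_top[of "t N"] by (rule eventually_mono[rotated]) blast
qed

lemma GAS_impulsive_if_geometric_bound:
  assumes "dwell_admissible T t" and "0 \<le> C" "0 \<le> q" "q < 1"
    and "\<And>x0 x k s. impulsive_solution A J t x0 x \<Longrightarrow> t k < s \<Longrightarrow> s \<le> t (Suc k) \<Longrightarrow>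
      norm (x s) \<le> C * q ^ k * norm x0"
  shows "GAS_impulsive A J t"
proof -
  have "\<exists>\<delta>>0. \<forall>x0 x. norm x0 < \<delta> \<and> impulsive_solution A J t x0 x \<longrightarrow> (\<forall>s\<ge>t 0. norm (x s) < \<epsilon>)"
    if "0 < \<epsilon>" for \<epsilon>
    by (rule impulsive_stable_if_geometric_bound[OF assms(1-4) that]) (fact assms(5))
  moreover have "(x \<longlongrightarrow> 0) at_top" if "impulsive_solution A J t x0 x" for x0 x
    by (rule impulsive_attractive_if_geometric_bound[OF assms(1-4) that]) (fact assms(5)[OF that])
  ultimately show ?thesis
    unfolding GAS_impulsive_def by blast
qed

lemma asymp_stable_min_dwell_if_cond_c:
  fixes A J :: "real^'n^'n"
  assumes A: "metzler A" and J: "nonneg_matrix J" and "cond_c A J T"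
  shows "asymp_stable_min_dwell A J T"
proof -
  obtain lam q where lam: "pos_vec lam" and row_A: "\<And>j. (lam v* A) $ j < 0"
    and "0 \<le> q" "q < 1"
    and contraction: "\<And>\<theta> j. T \<le> \<theta> \<Longrightarrow> (lam v* (J ** mexp (\<theta> *\<^sub>R A))) $ j \<le> q * lam $ j"
    using cond_c_contraction[OF A assms(3)] by metis
  define m where "m = Min (range (($) lam))"
  define K where "K = (\<Sum>i\<in>UNIV. (lam v* J) $ i)"
  have "0 < m"
    using lam by (simp add: m_def pos_vec_def)
  have "0 \<le> lam $ i" for i
    using lam by (simp add: pos_vec_def less_imp_le)
  then have lamJ_nonneg: "0 \<le> (lam v* J) $ i" for i
    using J by (auto simp: vector_matrix_mult_component nonneg_matrix_def intro!: sum_nonneg)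
  then have "0 \<le> K"
    by (simp add: K_def sum_nonneg)
  have bound: "norm (x s) \<le> K / m * q ^ k * norm x0"
    if "dwell_admissible T t" "impulsive_solution A J t x0 x" "t k < s" "s \<le> t (Suc k)"
    for t x0 x k s
  proof -
    have "m * norm (x s) \<le> q ^ k * weighted_l1 (lam v* J) x0"
      unfolding m_def using A J lam row_A \<open>0 \<le> q\<close> contraction that
      by (intro impulsive_solution_geometric_decay) (auto intro: less_imp_le)
    also have "\<dots> \<le> q ^ k * (K * norm x0)"
      unfolding K_def using lamJ_nonneg \<open>0 \<le> q\<close> by (intro mult_left_mono weighted_l1_le_norm) auto
    finally show ?thesis
      using \<open>0 < m\<close> by (simp add: field_simps)
  qed
  show ?thesis
    unfolding asymp_stable_min_dwell_def
    using \<open>0 \<le> K\<close> \<open>0 < m\<close> \<open>0 \<le> q\<close> \<open>q < 1\<close> bound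
    by (blast intro: GAS_impulsive_if_geometric_bound[where C = "K / m"] divide_nonneg_pos)
qed

theorem theorem3:
  fixes A J :: "real^'n^'n" and Tbar :: real
  assumes "metzler A" and "nonneg_matrix J" and "Tbar > 0"
  shows "(cond_a A J Tbar \<longleftrightarrow> cond_b A J Tbar) \<and>
         (cond_b A J Tbar \<longleftrightarrow> cond_c A J Tbar) \<and>
         (cond_c A J Tbar \<longleftrightarrow> cond_d A J Tbar) \<and>
         (cond_d A J Tbar \<longleftrightarrow> cond_e A J Tbar) \<and>
         (cond_e A J Tbar \<longleftrightarrow> cond_f A J Tbar) \<and>
         (cond_f A J Tbar \<longleftrightarrow> cond_g A J Tbar) \<and>
         ((cond_a A J Tbar \<or> cond_b A J Tbar \<or> cond_c A J Tbar \<or> cond_d A J Tbar \<or>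
           cond_e A J Tbar \<or> cond_f A J Tbar \<or> cond_g A J Tbar) \<longrightarrow>
          asymp_stable_min_dwell A J Tbar)"
proof -
  have abc: "cond_a A J Tbar \<longleftrightarrow> cond_c A J Tbar" "cond_b A J Tbar \<longleftrightarrow> cond_c A J Tbar"
    using cond_a_imp_b cond_b_imp_c cond_c_imp_a[OF assms(1)] by blast+
  have cf: "cond_c A J Tbar \<longleftrightarrow> cond_f A J Tbar"
    using cond_c_imp_f cond_f_imp_c[OF assms(1,3)] by blast
  have fg: "cond_f A J Tbar \<longleftrightarrow> cond_g A J Tbar"
    using cond_f_imp_g cond_g_imp_f by blast
  have stable: "cond_c A J Tbar \<Longrightarrow> asymp_stable_min_dwell A J Tbar"
    by (rule asymp_stable_min_dwell_if_cond_c[OF assms(1,2)])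
  show ?thesis
    using abc cf fg stable cond_c_iff_d cond_d_iff_e by blast
qed

end
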